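(* The function $f(t) = t^{-1}(1-e^t)\log(1-e^{-t})$ is a strictly decreasing bijection from $\mathbb{R}^+ = (0,\infty)$ onto $\mathbb{R}^+$. *)

theory Defs
  imports "HOL-Analysis.Analysis"
begin

definition fact_f :: "real \<Rightarrow> real" where
  "fact_f t = (1 / t) * (1 - exp t) * ln (1 - exp (- t))"

end

theory Submission imports Defs "HOL-Real_Asymp.Real_Asymp" begin

text \<open>
  Writing \<open>L t = ln (1 - exp (- t))\<close>, the derivative of \<open>fact_f\<close> is \<open>h t / t\<^sup>2\<close> with
  \<open>h t = t (- exp t L t - 1) - (1 - exp t) L t\<close>. One computes
  \<open>h' t = t exp t (- L t - 1 / (exp t - 1))\<close>, which is negative because
  \<open>- L t = ln (1 + u) < u\<close> for \<open>u = 1 / (exp t - 1)\<close>. As \<open>h\<close> tends to \<open>0\<close> at \<open>0\<close>, it is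
  negative, so \<open>fact_f\<close> is strictly decreasing. It is positive, tends to \<open>\<infinity>\<close> at \<open>0\<close> and to \<open>0\<close>
  at \<open>\<infinity>\<close>, so by continuity it maps \<open>{0<..}\<close> onto \<open>{0<..}\<close>.
\<close>

lemma bij_betw_pos_reals_if_strict_antimono:
  fixes f :: "real \<Rightarrow> real"
  assumes decr: "\<And>s t. 0 < s \<Longrightarrow> s < t \<Longrightarrow> f t < f s"
    and cont: "continuous_on {0<..} f"
    and pos: "\<And>t. 0 < t \<Longrightarrow> 0 < f t"
    and at_0: "filterlim f at_top (at_right 0)"
    and at_infinity: "(f \<longlongrightarrow> 0) at_top"
  shows "bij_betw f {0<..} {0<..}"
proof -
  have "inj_on f {0<..}"
    by (rule inj_onI) (metis decr greaterThan_iff linorder_neqE_linordered_idom less_irrefl)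
  moreover have "{0<..} \<subseteq> f ` {0<..}"
  proof
    fix y :: real assume "y \<in> {0<..}"
    have "\<forall>\<^sub>F t in at_right 0. y < f t"
      using at_0 filterlim_at_top_dense by blast
    then obtain b where b: "0 < b" "\<And>t. 0 < t \<Longrightarrow> t < b \<Longrightarrow> y < f t"
      unfolding eventually_at_right_field by auto
    have "\<forall>\<^sub>F t in at_top. f t < y"
      using at_infinity \<open>y \<in> {0<..}\<close> order_tendstoD(2) by auto
    then obtain N where N: "\<And>t. N \<le> t \<Longrightarrow> f t < y"
      unfolding eventually_at_top_linorder by auto
    have "b / 2 \<le> max N b" "f (max N b) < y" "y < f (b / 2)"
      using b N by auto
    moreover have "\<forall>x. b / 2 \<le> x \<and> x \<le> max N b \<longrightarrow> isCont f x"
      using b(1) cont by (auto intro!: continuous_on_interior[of "{0<..}"] simp: interior_open)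
    ultimately obtain x where "b / 2 \<le> x" "f x = y"
      using IVT2[of f "max N b" y "b / 2"] by auto
    with b(1) show "y \<in> f ` {0<..}"
      by force
  qed
  ultimately show ?thesis
    using pos by (auto simp: bij_betw_def)
qed

lemma less_at_right_limit_if_strict_antimono:
  fixes h :: "real \<Rightarrow> real"
  assumes lim: "(h \<longlongrightarrow> c) (at_right a)"
    and decr: "\<And>s t. a < s \<Longrightarrow> s < t \<Longrightarrow> h t < h s"
    and "a < t"
  shows "h t < c"
proof -
  define m where "m = (a + t) / 2"
  have m: "a < m" "m < t"
    using \<open>a < t\<close> by (auto simp: m_def)
  have "h m \<le> c"
  proof (rule tendsto_lowerbound[OF lim])
    show "\<forall>\<^sub>F x in at_right a. h m \<le> h x"
      unfolding eventually_at_right_field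
      using m by (intro exI[of _ m]) (auto intro: less_imp_le decr)
  qed simp
  with decr[OF m] show ?thesis
    by simp
qed

lemma minus_ln_one_minus_exp_neg_less:
  fixes t :: real
  assumes "0 < t"
  shows "- ln (1 - exp (- t)) < 1 / (exp t - 1)"
proof -
  define u where "u = 1 / (exp t - 1)"
  have "0 < u"
    using assms by (simp add: u_def)
  have "1 - exp (- t) = inverse (1 + u)"
    using assms by (simp add: u_def exp_minus field_simps)
  then have "- ln (1 - exp (- t)) = ln (1 + u)"
    using \<open>0 < u\<close> by (simp add: ln_inverse)
  with ln_add_one_self_less_self[OF \<open>0 < u\<close>] show ?thesis
    by (simp add: u_def)
qed

lemma has_real_derivative_ln_one_minus_exp_neg:
  fixes t :: real
  assumes "0 < t"
  shows "((\<lambda>t. ln (1 - exp (- t))) has_real_derivative 1 / (exp t - 1)) (at t)"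
proof -
  have "exp (- t) < 1" "1 < exp t"
    using assms by auto
  then show ?thesis
    by (auto intro!: derivative_eq_intros simp: exp_minus field_simps)
qed

definition fact_f_deriv_numer :: "real \<Rightarrow> real" where
  "fact_f_deriv_numer t =
     t * (- exp t * ln (1 - exp (- t)) - 1) - (1 - exp t) * ln (1 - exp (- t))"

lemma has_real_derivative_fact_f:
  fixes t :: real
  assumes "0 < t"
  shows "(fact_f has_real_derivative fact_f_deriv_numer t / t\<^sup>2) (at t)"
proof -
  \<comment> \<open>Abstracting \<open>L\<close> keeps \<open>derivative_eq_intros\<close> from differentiating through \<open>ln\<close>,
    which produces a derivative that \<open>field_simps\<close> cannot normalize efficiently.\<close>
  define L where "L t = ln (1 - exp (- t))" for t :: real
  have dL: "(L has_real_derivative 1 / (exp t - 1)) (at t)"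
    unfolding L_def[abs_def] using has_real_derivative_ln_one_minus_exp_neg[OF assms] .
  have "(1 - exp t) * (1 / (exp t - 1)) = - 1"
    using assms by (simp add: divide_simps)
  then have "((\<lambda>t. (1 - exp t) * L t) has_real_derivative - exp t * L t - 1) (at t)"
    by (auto intro!: derivative_eq_intros dL)
  then have "((\<lambda>t. (1 - exp t) * L t / t) has_real_derivative
              ((- exp t * L t - 1) * t - (1 - exp t) * L t * 1) / (t * t)) (at t)"
    using assms by (intro DERIV_divide) (auto intro!: derivative_eq_intros)
  moreover have "fact_f = (\<lambda>t. (1 - exp t) * L t / t)"
    by (simp add: fact_f_def[abs_def] L_def)
  ultimately show ?thesis
    by (simp add: fact_f_deriv_numer_def L_def power2_eq_square algebra_simps)
qed

lemma has_real_derivative_fact_f_deriv_numer: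
  fixes t :: real
  assumes "0 < t"
  shows "(fact_f_deriv_numer has_real_derivative
           t * exp t * (- ln (1 - exp (- t)) - 1 / (exp t - 1))) (at t)"
proof -
  define L where "L t = ln (1 - exp (- t))" for t :: real
  have dL: "(L has_real_derivative 1 / (exp t - 1)) (at t)"
    unfolding L_def[abs_def] using has_real_derivative_ln_one_minus_exp_neg[OF assms] .
  have h_eq: "fact_f_deriv_numer = (\<lambda>t. t * (- exp t * L t - 1) - (1 - exp t) * L t)"
    by (simp add: fact_f_deriv_numer_def[abs_def] L_def)
  have deriv: "(fact_f_deriv_numer has_real_derivative
               (- exp t * L t - 1) + t * (- exp t * L t - exp t * (1 / (exp t - 1)))
               - (- exp t * L t + (1 - exp t) * (1 / (exp t - 1)))) (at t)"
    unfolding h_eq by (auto intro!: derivative_eq_intros dL)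
  have "(1 - exp t) * (1 / (exp t - 1)) = - 1"
    using assms by (simp add: divide_simps)
  then have deriv_eq: "(- exp t * L t - 1) + t * (- exp t * L t - exp t * (1 / (exp t - 1)))
               - (- exp t * L t + (1 - exp t) * (1 / (exp t - 1)))
             = t * exp t * (- L t - 1 / (exp t - 1))"
    by (simp add: algebra_simps)
  show ?thesis
    using deriv unfolding deriv_eq unfolding L_def .
qed

lemma fact_f_deriv_numer_strict_antimono:
  fixes s t :: real
  assumes "0 < s" "s < t"
  shows "fact_f_deriv_numer t < fact_f_deriv_numer s"
proof (rule DERIV_neg_imp_decreasing[OF \<open>s < t\<close>])
  fix x assume "s \<le> x"
  with assms have "0 < x"
    by simp
  then have "x * exp x * (- ln (1 - exp (- x)) - 1 / (exp x - 1)) < 0"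
    using minus_ln_one_minus_exp_neg_less by (simp add: mult_pos_neg)
  with has_real_derivative_fact_f_deriv_numer[OF \<open>0 < x\<close>]
  show "\<exists>y. (fact_f_deriv_numer has_real_derivative y) (at x) \<and> y < 0"
    by blast
qed

lemma fact_f_deriv_numer_tendsto_0: "(fact_f_deriv_numer \<longlongrightarrow> 0) (at_right 0)"
  unfolding fact_f_deriv_numer_def[abs_def] by real_asymp

lemma fact_f_deriv_numer_neg: "0 < t \<Longrightarrow> fact_f_deriv_numer t < 0"
  by (rule less_at_right_limit_if_strict_antimono[OF fact_f_deriv_numer_tendsto_0
        fact_f_deriv_numer_strict_antimono])

lemma fact_f_strict_antimono:
  fixes s t :: real
  assumes "0 < s" "s < t"
  shows "fact_f t < fact_f s"
proof (rule DERIV_neg_imp_decreasing[OF \<open>s < t\<close>])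
  fix x assume "s \<le> x"
  with assms have "0 < x"
    by simp
  with has_real_derivative_fact_f fact_f_deriv_numer_neg
  show "\<exists>y. (fact_f has_real_derivative y) (at x) \<and> y < 0"
    by (intro exI[of _ "fact_f_deriv_numer x / x\<^sup>2"]) (auto simp: divide_neg_pos)
qed

lemma fact_f_pos:
  fixes t :: real
  assumes "0 < t"
  shows "0 < fact_f t"
proof -
  have "ln (1 - exp (- t)) < 0" "1 - exp t < 0"
    using assms by auto
  with assms show ?thesis
    by (simp add: fact_f_def mult_neg_neg)
qed

lemma continuous_on_fact_f: "continuous_on {0<..} fact_f"
  using has_real_derivative_fact_f
  by (intro DERIV_continuous_on[where D = "\<lambda>t. fact_f_deriv_numer t / t\<^sup>2"])
    (auto intro: has_field_derivative_at_within)

lemma fact_f_tendsto_at_right_0: "filterlim fact_f at_top (at_right 0)"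
  unfolding fact_f_def[abs_def] by real_asymp

lemma fact_f_tendsto_at_top: "(fact_f \<longlongrightarrow> 0) at_top"
  unfolding fact_f_def[abs_def] by real_asymp

theorem fact2p3:
  shows "(\<forall>s\<in>{0<..}. \<forall>t\<in>{0<..}. s < t \<longrightarrow> fact_f t < fact_f s)
         \<and> bij_betw fact_f {0<..} {0<..}"
  using fact_f_strict_antimono
    bij_betw_pos_reals_if_strict_antimono[OF fact_f_strict_antimono continuous_on_fact_f
      fact_f_pos fact_f_tendsto_at_right_0 fact_f_tendsto_at_top]
  by auto

end
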